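(* With notation as below, the following sequences of group homomorphisms (arising from the long exact cohomology sequences of $0\to Q_\bullet\to\widehat{Y}_\bullet\to\widehat{Y}_\bullet/Q_\bullet\to0$, $Y\in\{A,AA,Q\}$) are exact: $$0\to Q_0\to Q_0\to \widehat{A}_0/Q_0\to Q_1\to Q_1/A_1\to\widehat{A}_1/Q_1\to Q_2\to Q_2/A_2\to\widehat{A}_2/Q_2\to\cdots$$ $$0\to Q_0\to Q_0\to \widehat{AA}_0/Q_0\to Q_1\to Q_1/AA_1\to\widehat{AA}_1/Q_1\to Q_2\to Q_2/AA_2\to\widehat{AA}_2/Q_2\to\cdots$$ $$0\to Q_0\to Q_0\to \widehat{Q}_0/Q_0\to Q_1\to 0\to\widehat{Q}_1/Q_1\to Q_2\to 0\to\cdots$$ Here $H^0(Q_\bullet)=Q_0$, $H^0(\widehat{Y}_\bullet)=Q_0$, $H^n(Q_\bullet)=Q_n$, $H^n(\widehat{A}_\bullet)=Q_n/A_n$, $H^n(\widehat{AA}_\bullet)=Q_n/AA_n$, $H^n(\widehat{Q}_\bullet)=0$ for $n\ge1$, and $H^n(\widehat{Y}_\bullet/Q_\bullet)=\widehat{Y}_n/Q_n\cong Y_{n+1}$ for $n\ge0$. In particular, for every $n\ge1$, $0\to A_n\to Q_n\to Q_n/A_n\to0$ and $0\to AA_n\to Q_n\to Q_n/AA_n\to0$ are exact and $\widehat{Q}_n/Q_n\cong Q_{n+1}$.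
   Context: A po-group is an abelian group with a translation-invariant partial order; $G^+=\{g:0\le g\}$. An atom is a minimal element of $G^+\setminus\{0\}$; $A(G)$ is the subgroup generated by atoms; $AA(G)$ is the subgroup generated by $\{g\in G^+:\exists a\in A(G)\cap G^+,\ g+a\in A(G)\}$; $Q(G)$ is the subgroup generated by $\{g\in G^+:\exists h\in G^+,\ g+h\in A(G)\}$. Quasi-atomic quotient sequence: $G_0=G$, $G_{n+1}=G_n/Q(G_n)$, $\pi_n:G_n\to G_{n+1}$ natural projection. $A_n=A(G_n)$, $AA_n=AA(G_n)$, $Q_n=Q(G_n)$, $\widehat{A}_n=\pi_n^{-1}(A_{n+1})$, $\widehat{AA}_n=\pi_n^{-1}(AA_{n+1})$, $\widehat{Q}_n=\pi_n^{-1}(Q_{n+1})$. Each of $Q_\bullet,\widehat{Y}_\bullet,\widehat{Y}_\bullet/Q_\bullet$ ($Y\in\{A,AA,Q\}$) is a cochain complex, zero in negative degrees, with differentials $\delta_n$ induced by $\pi_n$; the cohomology is $H^n(X_\bullet)=\ker\delta_n/\operatorname{Im}\delta_{n-1}$ (as abelian groups). *)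

theory Defs
  imports Main
begin

text \<open>A po-group is modelled as a type of class ordered_ab_group_add
(abelian group with translation-invariant partial order).  The iterated
quotients G_n are presented as G / K for a subgroup K of G; every subgroup
of G / K is represented by its preimage in G (a subgroup containing K), and
every subquotient by a pair (N, D) of subgroups of G with D contained in N,
standing for N / D.\<close>

definition add_subgroup :: "'a::ab_group_add set \<Rightarrow> bool" where
  "add_subgroup H \<longleftrightarrow> 0 \<in> H \<and> (\<forall>x\<in>H. \<forall>y\<in>H. x + y \<in> H) \<and> (\<forall>x\<in>H. - x \<in> H)"

definition gen :: "'a::ab_group_add set \<Rightarrow> 'a set" where
  "gen S = \<Inter> {H. add_subgroup H \<and> S \<subseteq> H}"

definition set_sum :: "'a::ab_group_add set \<Rightarrow> 'a set \<Rightarrow> 'a set" where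
  "set_sum A B = {a + b | a b. a \<in> A \<and> b \<in> B}"

text \<open>Positive cone of G / K (preimage in G): the image of G^+.\<close>
definition qpos :: "'a::ordered_ab_group_add set \<Rightarrow> 'a set" where
  "qpos K = {x. \<exists>k\<in>K. 0 \<le> x + k}"

text \<open>Atoms of G / K (preimage in G): minimal elements of (G/K)^+ minus 0.
  In G / K: y \<le> x iff x - y \<in> qpos K, and y = x iff x - y \<in> K.\<close>
definition qatoms :: "'a::ordered_ab_group_add set \<Rightarrow> 'a set" where
  "qatoms K = {x. x \<in> qpos K \<and> x \<notin> K \<and>
     (\<forall>y. y \<in> qpos K \<and> y \<notin> K \<and> x - y \<in> qpos K \<longrightarrow> x - y \<in> K)}"

text \<open>Preimages in G of A(G/K), AA(G/K), Q(G/K).\<close>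
definition qA :: "'a::ordered_ab_group_add set \<Rightarrow> 'a set" where
  "qA K = gen (K \<union> qatoms K)"

definition qAA :: "'a::ordered_ab_group_add set \<Rightarrow> 'a set" where
  "qAA K = gen (K \<union> {g. g \<in> qpos K \<and>
      (\<exists>a. a \<in> qA K \<and> a \<in> qpos K \<and> g + a \<in> qA K)})"

definition qQ :: "'a::ordered_ab_group_add set \<Rightarrow> 'a set" where
  "qQ K = gen (K \<union> {g. g \<in> qpos K \<and> (\<exists>h. h \<in> qpos K \<and> g + h \<in> qA K)})"

text \<open>G_n = G / Kseq n; Q_n = Kseq (n+1) / Kseq n.\<close>
primrec Kseq :: "nat \<Rightarrow> 'a::ordered_ab_group_add set" where
  "Kseq 0 = {0}"
| "Kseq (Suc n) = qQ (Kseq n)"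

datatype ykind = YA | YAA | YQ

fun Yrel :: "ykind \<Rightarrow> 'a::ordered_ab_group_add set \<Rightarrow> 'a set" where
  "Yrel YA K = qA K"
| "Yrel YAA K = qAA K"
| "Yrel YQ K = qQ K"

text \<open>A cochain complex X_n = S n / T n whose differentials are induced by the
  projections pi_n, i.e. by the identity on representatives.\<close>

definition Qcx :: "(nat \<Rightarrow> 'a::ordered_ab_group_add set) \<times> (nat \<Rightarrow> 'a set)" where
  "Qcx = ((\<lambda>n. Kseq (Suc n)), (\<lambda>n. Kseq n))"

text \<open>hat Y_bullet: hat Y_n = pi_n^{-1}(Y_{n+1}) \<subseteq> G_n\<close>
definition Ycx :: "ykind \<Rightarrow> (nat \<Rightarrow> 'a::ordered_ab_group_add set) \<times> (nat \<Rightarrow> 'a set)" where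
  "Ycx Y = ((\<lambda>n. Yrel Y (Kseq (Suc n))), (\<lambda>n. Kseq n))"

definition YQcx :: "ykind \<Rightarrow> (nat \<Rightarrow> 'a::ordered_ab_group_add set) \<times> (nat \<Rightarrow> 'a set)" where
  "YQcx Y = ((\<lambda>n. Yrel Y (Kseq (Suc n))), (\<lambda>n. Kseq (Suc n)))"

text \<open>H^n(X) = ker delta_n / Im delta_{n-1}, as a subquotient (numerator, denominator):
  representatives of ker delta_n are S n \<inter> T (n+1); of Im delta_{n-1} are
  S (n-1) + T n (resp. T 0 when n = 0, since X_{-1} = 0).\<close>
definition coh :: "(nat \<Rightarrow> 'a::ab_group_add set) \<times> (nat \<Rightarrow> 'a set) \<Rightarrow> nat \<Rightarrow> 'a set \<times> 'a set" where
  "coh X n = (fst X n \<inter> snd X (Suc n),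
              (if n = 0 then snd X 0 else set_sum (fst X (n - 1)) (snd X n)))"

text \<open>Long cohomology sequence of 0 -> X1 -> X2 -> X3 -> 0:
  H^0(X1), H^0(X2), H^0(X3), H^1(X1), ...; all maps (inclusion-induced,
  projection-induced, connecting) are induced by the identity on representatives.\<close>
definition les :: "(nat \<Rightarrow> 'a::ab_group_add set) \<times> (nat \<Rightarrow> 'a set) \<Rightarrow>
    (nat \<Rightarrow> 'a set) \<times> (nat \<Rightarrow> 'a set) \<Rightarrow> (nat \<Rightarrow> 'a set) \<times> (nat \<Rightarrow> 'a set) \<Rightarrow>
    nat \<Rightarrow> 'a set \<times> 'a set" where
  "les X1 X2 X3 k = (if k mod 3 = 0 then coh X1 (k div 3)
                     else if k mod 3 = 1 then coh X2 (k div 3) else coh X3 (k div 3))"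

definition subquot :: "'a::ab_group_add set \<times> 'a set \<Rightarrow> bool" where
  "subquot X \<longleftrightarrow> add_subgroup (fst X) \<and> add_subgroup (snd X) \<and> snd X \<subseteq> fst X"

text \<open>x + D1 \<mapsto> x + D2 is a well-defined homomorphism N1/D1 -> N2/D2\<close>
definition ind_hom :: "'a::ab_group_add set \<times> 'a set \<Rightarrow> 'a set \<times> 'a set \<Rightarrow> bool" where
  "ind_hom X Y \<longleftrightarrow> fst X \<subseteq> fst Y \<and> snd X \<subseteq> snd Y"

text \<open>kernel of the map X2 -> X3 equals image of X1 -> X2 (on representatives)\<close>
definition exact_at :: "'a::ab_group_add set \<times> 'a set \<Rightarrow> 'a set \<times> 'a set \<Rightarrow> 'a set \<times> 'a set \<Rightarrow> bool" where
  "exact_at X1 X2 X3 \<longleftrightarrow>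
     {x \<in> fst X2. x \<in> snd X3} = {x \<in> fst X2. \<exists>y \<in> fst X1. x - y \<in> snd X2}"

definition inj_at :: "'a::ab_group_add set \<times> 'a set \<Rightarrow> 'a set \<times> 'a set \<Rightarrow> bool" where
  "inj_at X Y \<longleftrightarrow> (\<forall>x \<in> fst X. x \<in> snd Y \<longrightarrow> x \<in> snd X)"

definition surj_at :: "'a::ab_group_add set \<times> 'a set \<Rightarrow> 'a set \<times> 'a set \<Rightarrow> bool" where
  "surj_at X Y \<longleftrightarrow> (\<forall>x \<in> fst Y. \<exists>y \<in> fst X. x - y \<in> snd Y)"

definition exact_seq0 :: "(nat \<Rightarrow> 'a::ab_group_add set \<times> 'a set) \<Rightarrow> bool" where
  "exact_seq0 L \<longleftrightarrow> (\<forall>k. subquot (L k)) \<and> (\<forall>k. ind_hom (L k) (L (Suc k))) \<and>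
     inj_at (L 0) (L 1) \<and> (\<forall>k. exact_at (L k) (L (Suc k)) (L (Suc (Suc k))))"

definition short_exact :: "'a::ab_group_add set \<times> 'a set \<Rightarrow> 'a set \<times> 'a set \<Rightarrow> 'a set \<times> 'a set \<Rightarrow> bool" where
  "short_exact X Y Z \<longleftrightarrow> subquot X \<and> subquot Y \<and> subquot Z \<and> ind_hom X Y \<and> ind_hom Y Z \<and>
     inj_at X Y \<and> exact_at X Y Z \<and> surj_at Y Z"

end

theory Submission
  imports Defs
begin

text \<open>Write G_n = G / K_n.  Since A(G_n) \<subseteq> AA(G_n) \<subseteq> Q(G_n), each of A, AA, Q of G_n pulls back
  to a subgroup Y(K_n) between K_n and K_(n+1); so every complex involved is a subquotient of the
  single filtration K_0 \<subseteq> Y(K_0) \<subseteq> K_1 \<subseteq> Y(K_1) \<subseteq> K_2 \<subseteq> \<dots>.  Kernels and images of the differentials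
  are then intersections and sums of nested subgroups, which collapse to the smaller resp.
  larger one, and the long cohomology sequence runs through consecutive steps of the
  filtration, which makes exactness automatic.\<close>

lemma add_subgroup_zero: "add_subgroup H \<Longrightarrow> 0 \<in> H"
  unfolding add_subgroup_def by auto

lemma add_subgroup_add: "add_subgroup H \<Longrightarrow> x \<in> H \<Longrightarrow> y \<in> H \<Longrightarrow> x + y \<in> H"
  unfolding add_subgroup_def by auto

lemma add_subgroup_gen: "add_subgroup (gen S)"
  unfolding gen_def add_subgroup_def by auto

lemma gen_superset: "S \<subseteq> gen S"
  unfolding gen_def by auto

lemma gen_least: "add_subgroup H \<Longrightarrow> S \<subseteq> H \<Longrightarrow> gen S \<subseteq> H"
  unfolding gen_def by auto

lemma set_sum_eq_left:
  assumes "add_subgroup A" "B \<subseteq> A" "0 \<in> B"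
  shows "set_sum A B = A"
proof
  show "set_sum A B \<subseteq> A"
    using assms(1,2) unfolding set_sum_def by (auto intro: add_subgroup_add)
  show "A \<subseteq> set_sum A B"
    using assms(3) unfolding set_sum_def by force
qed

lemma set_sum_eq_right:
  assumes "add_subgroup B" "A \<subseteq> B" "0 \<in> A"
  shows "set_sum A B = B"
proof
  show "set_sum A B \<subseteq> B"
    using assms(1,2) unfolding set_sum_def by (auto intro: add_subgroup_add)
  show "B \<subseteq> set_sum A B"
    using assms(3) unfolding set_sum_def by force
qed

lemma qA_subset_qAA:
  assumes K: "add_subgroup (K::'a::ordered_ab_group_add set)"
  shows "qA K \<subseteq> qAA K"
  unfolding qA_def
proof (rule gen_least)
  show "add_subgroup (qAA K)"
    unfolding qAA_def by (rule add_subgroup_gen)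
  let ?S = "K \<union> {g. g \<in> qpos K \<and> (\<exists>a. a \<in> qA K \<and> a \<in> qpos K \<and> g + a \<in> qA K)}"
  have "0 \<in> qA K"
    unfolding qA_def by (rule add_subgroup_zero[OF add_subgroup_gen])
  moreover have "0 \<in> qpos K"
    using add_subgroup_zero[OF K] unfolding qpos_def by force
  moreover have "qatoms K \<subseteq> qA K"
    unfolding qA_def using gen_superset by blast
  moreover have "qatoms K \<subseteq> qpos K"
    unfolding qatoms_def by blast
  \<comment> \<open>an atom a lies in AA with witness 0, since a + 0 = a \<in> A\<close>
  ultimately have "qatoms K \<subseteq> ?S"
    by (auto intro!: exI[of _ 0])
  then have "K \<union> qatoms K \<subseteq> ?S"
    by blast
  also have "?S \<subseteq> qAA K"
    unfolding qAA_def by (rule gen_superset)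
  finally show "K \<union> qatoms K \<subseteq> qAA K" .
qed

lemma qAA_subset_qQ: "qAA K \<subseteq> qQ K"
  unfolding qAA_def qQ_def
  by (rule gen_least[OF add_subgroup_gen], rule subset_trans[OF _ gen_superset]) blast

lemma add_subgroup_Yrel: "add_subgroup (Yrel Y K)"
  by (cases Y) (simp_all add: qA_def qAA_def qQ_def add_subgroup_gen)

lemma subset_Yrel: "K \<subseteq> Yrel Y K"
  by (cases Y) (auto simp: qA_def qAA_def qQ_def intro: subsetD[OF gen_superset])

lemma Yrel_subset_qQ: "add_subgroup K \<Longrightarrow> Yrel Y K \<subseteq> qQ K"
  by (cases Y) (use qA_subset_qAA qAA_subset_qQ in auto)

lemma add_subgroup_Kseq: "add_subgroup (Kseq n)"
  by (cases n) (simp_all only: Kseq.simps qQ_def add_subgroup_gen, simp add: add_subgroup_def)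

lemma qQ_Kseq [simp]: "qQ (Kseq n) = Kseq (Suc n)"
  by (simp add: Kseq.simps)

declare Kseq.simps [simp del]

lemma Yrel_Kseq_subset: "Yrel Y (Kseq n) \<subseteq> Kseq (Suc n)"
  using Yrel_subset_qQ[OF add_subgroup_Kseq] by simp

lemma Kseq_subset_Suc: "Kseq n \<subseteq> Kseq (Suc n)"
  using subset_Yrel Yrel_Kseq_subset by blast

lemma coh_Qcx: "coh Qcx n = (Kseq (Suc n), Kseq n)"
  unfolding coh_def Qcx_def
  by (cases n) (simp_all add: set_sum_eq_left add_subgroup_Kseq add_subgroup_zero)

lemma coh_Ycx: "coh (Ycx Y) n = (Kseq (Suc n), if n = 0 then Kseq 0 else Yrel Y (Kseq n))"
  unfolding coh_def Ycx_def using subset_Yrel[of "Kseq (Suc n)" Y]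
  by (cases n)
    (auto simp: set_sum_eq_left[OF add_subgroup_Yrel subset_Yrel add_subgroup_zero[OF add_subgroup_Kseq]])

lemma coh_YQcx: "coh (YQcx Y) n = (Yrel Y (Kseq (Suc n)), Kseq (Suc n))"
  unfolding coh_def YQcx_def using Yrel_Kseq_subset
  by (cases n) (auto simp: set_sum_eq_right add_subgroup_Yrel add_subgroup_zero add_subgroup_Kseq)

lemma exact_atI:
  assumes "0 \<in> D2" "add_subgroup D3" "N2 \<inter> D3 \<subseteq> N1" "N1 \<subseteq> D3" "D2 \<subseteq> D3"
  shows "exact_at (N1, D1) (N2, D2) (N3, D3)"
  unfolding exact_at_def fst_conv snd_conv
proof (intro Collect_cong conj_cong refl iffI)
  fix x assume "x \<in> N2" "x \<in> D3"
  then show "\<exists>y\<in>N1. x - y \<in> D2"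
    using assms by (intro bexI[of _ x]) auto
next
  fix x assume "\<exists>y\<in>N1. x - y \<in> D2"
  then obtain y where "y \<in> N1" "x - y \<in> D2" by blast
  then have "y + (x - y) \<in> D3"
    using assms by (intro add_subgroup_add[OF assms(2)]) auto
  then show "x \<in> D3" by simp
qed

lemma exact_seq0_staircase:
  assumes sq: "\<And>k. subquot (N k, D k)"
    and D_mono: "\<And>k. D k \<subseteq> D (Suc k)" and D_0: "D 1 \<subseteq> D 0"
    and step: "\<And>k. N (Suc k) \<inter> D (Suc (Suc k)) = N k"
  shows "exact_seq0 (\<lambda>k. (N k, D k))"
  unfolding exact_seq0_def
proof (intro conjI allI)
  fix k
  show "ind_hom (N k, D k) (N (Suc k), D (Suc k))"
    unfolding ind_hom_def using step[of k] D_mono[of k] by auto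
  have "add_subgroup (D (Suc k))" "add_subgroup (D (Suc (Suc k)))"
    using sq unfolding subquot_def by auto
  then show "exact_at (N k, D k) (N (Suc k), D (Suc k)) (N (Suc (Suc k)), D (Suc (Suc k)))"
    using step[of k] D_mono[of "Suc k"] by (intro exact_atI add_subgroup_zero) auto
qed (use sq D_0 in \<open>auto simp: inj_at_def\<close>)

lemma short_exact_subgroup_chain:
  assumes "add_subgroup A" "add_subgroup B" "add_subgroup C" "A \<subseteq> B" "B \<subseteq> C"
  shows "short_exact (B, A) (C, A) (C, B)"
proof -
  have "surj_at (C, A) (C, B)"
    unfolding surj_at_def using add_subgroup_zero[OF assms(2)] by force
  moreover have "exact_at (B, A) (C, A) (C, B)"
    using assms by (intro exact_atI add_subgroup_zero) auto
  ultimately show ?thesis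
    using assms unfolding short_exact_def subquot_def ind_hom_def inj_at_def by auto
qed

lemma nat_cases_mod3:
  assumes "\<And>n. P (3 * n)" "\<And>n. P (Suc (3 * n))" "\<And>n. P (Suc (Suc (3 * n)))"
  shows "P k"
proof -
  have "k = 3 * (k div 3) + k mod 3" by simp
  moreover have "k mod 3 = 0 \<or> k mod 3 = 1 \<or> k mod 3 = 2" by auto
  ultimately show "P k"
    using assms by (metis add.right_neutral add_Suc_right One_nat_def numeral_2_eq_2)
qed

lemma les_mod3:
  "les X1 X2 X3 (3 * n) = coh X1 n"
  "les X1 X2 X3 (Suc (3 * n)) = coh X2 n"
  "les X1 X2 X3 (Suc (Suc (3 * n))) = coh X3 n"
proof -
  have "3 * n mod 3 = 0" "Suc (3 * n) mod 3 = 1" "Suc (Suc (3 * n)) mod 3 = 2"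
    "3 * n div 3 = n" "Suc (3 * n) div 3 = n" "Suc (Suc (3 * n)) div 3 = n"
    by presburger+
  then show "les X1 X2 X3 (3 * n) = coh X1 n" "les X1 X2 X3 (Suc (3 * n)) = coh X2 n"
    "les X1 X2 X3 (Suc (Suc (3 * n))) = coh X3 n"
    unfolding les_def by simp_all
qed

lemma exact_seq0_les:
  "exact_seq0 (les (Qcx :: (nat \<Rightarrow> 'a::ordered_ab_group_add set) \<times> _) (Ycx Y) (YQcx Y))"
proof -
  let ?L = "les (Qcx :: (nat \<Rightarrow> 'a set) \<times> _) (Ycx Y) (YQcx Y)"
  define N where "N k = fst (?L k)" for k
  define D where "D k = snd (?L k)" for k
  have L: "?L = (\<lambda>k. (N k, D k))"
    unfolding N_def D_def by simp
  have next_block: "?L (Suc (Suc (Suc (3 * n)))) = coh Qcx (Suc n)"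
    "?L (Suc (Suc (Suc (Suc (3 * n))))) = coh (Ycx Y) (Suc n)" for n
    using les_mod3(1,2)[of _ _ _ "Suc n"] by (simp_all add: numeral_3_eq_3)
  note les_values = N_def D_def les_mod3 coh_Qcx coh_Ycx coh_YQcx next_block
  note chain = subsetD[OF Kseq_subset_Suc] subsetD[OF subset_Yrel] subsetD[OF Yrel_Kseq_subset]
  have sq: "subquot (N k, D k)" for k
    by (rule nat_cases_mod3[of _ k])
      (auto simp: les_values subquot_def add_subgroup_Kseq add_subgroup_Yrel intro: chain)
  have D_mono: "D k \<subseteq> D (Suc k)" for k
    by (rule nat_cases_mod3[of _ k]) (auto simp: les_values intro: chain)
  have step: "N (Suc k) \<inter> D (Suc (Suc k)) = N k" for k
    by (rule nat_cases_mod3[of _ k]) (auto simp: les_values intro: chain)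
  have D_0: "D 1 \<subseteq> D 0"
    by (simp add: D_def les_mod3(1,2)[of _ _ _ 0, simplified] coh_Qcx coh_Ycx)
  show ?thesis
    unfolding L using sq D_mono D_0 step by (rule exact_seq0_staircase)
qed

theorem corollary3p6:
  fixes G :: "'a::ordered_ab_group_add itself"
  defines "K \<equiv> (Kseq :: nat \<Rightarrow> 'a set)"
  shows
    \<comment> \<open>the three long exact sequences\<close>
    "(\<forall>Y. exact_seq0 (les (Qcx :: (nat \<Rightarrow> 'a set) \<times> _) (Ycx Y) (YQcx Y)))
     \<comment> \<open>degree 0: H^0(Q) = Q_0 and H^0(hat Y) = Q_0\<close>
     \<and> coh (Qcx :: (nat \<Rightarrow> 'a set) \<times> _) 0 = (K 1, K 0)
     \<and> (\<forall>Y. coh (Ycx Y :: (nat \<Rightarrow> 'a set) \<times> _) 0 = (K 1, K 0))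
     \<comment> \<open>degrees n >= 1\<close>
     \<and> (\<forall>n\<ge>1. coh (Qcx :: (nat \<Rightarrow> 'a set) \<times> _) n = (K (Suc n), K n))
     \<and> (\<forall>n\<ge>1. coh (Ycx YA :: (nat \<Rightarrow> 'a set) \<times> _) n = (K (Suc n), qA (K n)))
     \<and> (\<forall>n\<ge>1. coh (Ycx YAA :: (nat \<Rightarrow> 'a set) \<times> _) n = (K (Suc n), qAA (K n)))
     \<and> (\<forall>n\<ge>1. fst (coh (Ycx YQ :: (nat \<Rightarrow> 'a set) \<times> _) n) = snd (coh (Ycx YQ) n))
     \<comment> \<open>H^n(hat Y / Q) = hat Y_n / Q_n, which is Y_{n+1}\<close>
     \<and> (\<forall>Y n. coh (YQcx Y :: (nat \<Rightarrow> 'a set) \<times> _) n = (Yrel Y (K (Suc n)), K (Suc n)))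
     \<comment> \<open>in particular\<close>
     \<and> (\<forall>n\<ge>1. short_exact (qA (K n), K n) (K (Suc n), K n) (K (Suc n), qA (K n)))
     \<and> (\<forall>n\<ge>1. short_exact (qAA (K n), K n) (K (Suc n), K n) (K (Suc n), qAA (K n)))
     \<and> (\<forall>n\<ge>1. coh (YQcx YQ :: (nat \<Rightarrow> 'a set) \<times> _) n = (K (Suc (Suc n)), K (Suc n)))"
proof -
  have short_exact_Yrel:
    "short_exact (Yrel Y (K n), K n) (K (Suc n), K n) (K (Suc n), Yrel Y (K n))" for Y n
    unfolding K_def
    by (rule short_exact_subgroup_chain[OF add_subgroup_Kseq add_subgroup_Yrel add_subgroup_Kseq
          subset_Yrel Yrel_Kseq_subset])
  show ?thesis
    using short_exact_Yrel[of YA] short_exact_Yrel[of YAA]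
    by (simp add: K_def exact_seq0_les coh_Qcx coh_Ycx coh_YQcx)
qed

end
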